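(* Let $d\ge3$ and $\mathcal D=\mathbb S_1^{d-1}$. Then for any $M\in\mathrm{SL}(d+1,\mathbb R)$, $\mathcal G_{\mathcal D}(M)\le\sigma_d+1$, where $\sigma_d$ is the kissing number of $\mathbb R^d$.
   Context: $\mathbb S_1^{d-1}$ is the unit sphere in $\mathbb R^d$. Elements of $\mathbb R^{d+1}$ are row vectors $(u,\vec v)$ with $u\in\mathbb R$, $\vec v\in\mathbb R^d$; $\mathbb Z^{d+1}M$ is the lattice $\{\vec mM:\vec m\in\mathbb Z^{d+1}\}$. For $\mathcal D\subseteq\mathbb S_1^{d-1}$ and $t\in(0,1)$, $\mathcal Q_{\mathcal D}(M,t)=\{(u,\vec v)\in\mathbb Z^{d+1}M : -t<u<1-t,\ \vec v\in\mathbb R_{>0}\mathcal D\}$, $F_{\mathcal D}(M,t)=\min\{|\vec v| : (u,\vec v)\in\mathcal Q_{\mathcal D}(M,t)\}$, and $\mathcal G_{\mathcal D}(M)=|\{F_{\mathcal D}(M,t):0<t<1\}|$. The kissing number $\sigma_d$ is the maximal number of non-overlapping unit balls in $\mathbb R^d$ touching a fixed unit ball. *)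

theory Defs
  imports "HOL-Analysis.Analysis"
begin

text \<open>R^d is modelled as the type real^'n (d = CARD('n)); R^(d+1) is
  modelled as real^('n option), where the coordinate None is the first coordinate u
  and the coordinates Some j form the vector part v.\<close>

definition first_coord :: "real^('n::finite option) \<Rightarrow> real" where
  "first_coord w = w $ None"

definition vec_part :: "real^('n::finite option) \<Rightarrow> real^'n" where
  "vec_part w = (\<chi> j. w $ Some j)"

definition lattice :: "real^('n::finite option)^('n option) \<Rightarrow> (real^('n option)) set" where
  "lattice M = {m v* M | m. \<forall>i. m $ i \<in> \<int>}"

definition pos_cone :: "(real^'n::finite) set \<Rightarrow> (real^'n) set" where
  "pos_cone D = {r *\<^sub>R x | r x. r > 0 \<and> x \<in> D}"

definition Q_set :: "(real^'n::finite) set \<Rightarrow> real^('n option)^('n option) \<Rightarrow> real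
    \<Rightarrow> (real^('n option)) set" where
  "Q_set D M t = {w \<in> lattice M. - t < first_coord w \<and> first_coord w < 1 - t
                    \<and> vec_part w \<in> pos_cone D}"

definition F_fun :: "(real^'n::finite) set \<Rightarrow> real^('n option)^('n option) \<Rightarrow> real \<Rightarrow> real" where
  "F_fun D M t = Inf (norm ` vec_part ` Q_set D M t)"

definition value_set :: "(real^'n::finite) set \<Rightarrow> real^('n option)^('n option) \<Rightarrow> real set" where
  "value_set D M = {F_fun D M t | t. 0 < t \<and> t < 1}"

text \<open>Kissing number of the space 'a: the maximal number of pairwise non-overlapping
  (open) unit balls touching the unit ball centred at 0, i.e. centres at distance 2
  from 0 and pairwise at distance at least 2.\<close>
definition kissing_number :: "'a::real_normed_vector itself \<Rightarrow> nat" where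
  "kissing_number _ = Sup {card S | S :: 'a set. finite S \<and> S \<subseteq> sphere 0 2 \<and>
        (\<forall>x\<in>S. \<forall>y\<in>S. x \<noteq> y \<longrightarrow> ball x 1 \<inter> ball y 1 = {})}"

end

theory Submission
  imports Defs
begin

text \<open>Because the lattice is symmetric under \<open>w \<mapsto> -w\<close>, \<open>F(t)\<close> is the least \<open>|v|\<close> over lattice points
  \<open>(u, v)\<close> with \<open>v \<noteq> 0\<close> and \<open>0 \<le> u < s\<close>, where \<open>s = max t (1 - t) \<in> [1/2, 1)\<close>; as a function of \<open>s\<close>
  it is non-increasing, and discreteness of the lattice makes the minimum attained. Every value
  other than the one at \<open>s = 1/2\<close> is therefore attained at a lattice point with \<open>u \<in> [1/2, 1)\<close>
  whose vector part is minimal among all points with \<open>0 \<le> u < 1/2\<close>. Differences of two such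
  points, up to sign, are of that kind, so each of the two vector parts is no longer than their
  difference. Then the two vectors enclose an angle of at least \<open>\<pi>/3\<close>, and the directions of the
  vectors attaining the different values form a kissing configuration.\<close>

lemma lattice_zero: "0 \<in> lattice M"
  unfolding lattice_def by (rule CollectI, rule exI[of _ 0]) simp

lemma lattice_diff:
  assumes "a \<in> lattice M" "b \<in> lattice M"
  shows "a - b \<in> lattice M"
proof -
  obtain m n where "a = m v* M" "b = n v* M" "\<forall>i. m $ i \<in> \<int>" "\<forall>i. n $ i \<in> \<int>"
    using assms unfolding lattice_def by blast
  then have "a - b = (m - n) v* M \<and> (\<forall>i. (m - n) $ i \<in> \<int>)"
    by (simp add: vector_matrix_mult_diff_distrib)
  then show ?thesis
    unfolding lattice_def by blast
qed

lemma lattice_uminus: "a \<in> lattice M \<Longrightarrow> - a \<in> lattice M"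
  using lattice_diff[OF lattice_zero, of a M] by simp

lemma first_coord_diff [simp]: "first_coord (a - b) = first_coord a - first_coord b"
  by (simp add: first_coord_def)

lemma first_coord_uminus [simp]: "first_coord (- a) = - first_coord a"
  by (simp add: first_coord_def)

lemma vec_part_diff [simp]: "vec_part (a - b) = vec_part a - vec_part b"
  by (simp add: vec_part_def vec_eq_iff)

lemma vec_part_uminus [simp]: "vec_part (- a) = - vec_part a"
  by (simp add: vec_part_def vec_eq_iff)

lemma norm_le_first_coord_plus_vec_part:
  fixes w :: "real^('n::finite option)"
  shows "norm w \<le> \<bar>first_coord w\<bar> + norm (vec_part w)"
proof -
  have "(norm w)\<^sup>2 = (\<Sum>i\<in>insert None (range Some). w $ i * w $ i)"
    by (simp add: power2_norm_eq_inner inner_vec_def UNIV_option_conv)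
  also have "\<dots> = (first_coord w)\<^sup>2 + (\<Sum>j\<in>UNIV. w $ Some j * w $ Some j)"
    by (simp add: sum.reindex first_coord_def power2_eq_square)
  also have "\<dots> = (first_coord w)\<^sup>2 + (norm (vec_part w))\<^sup>2"
    by (simp add: power2_norm_eq_inner inner_vec_def vec_part_def)
  also have "\<dots> \<le> (\<bar>first_coord w\<bar> + norm (vec_part w))\<^sup>2"
    by (simp add: power2_eq_square algebra_simps)
  finally show ?thesis
    by (rule power2_le_imp_le) simp
qed

lemma pos_cone_sphere: "pos_cone (sphere (0::real^'n::finite) 1) = - {0}"
proof (intro set_eqI iffI)
  fix v :: "real^'n"
  assume "v \<in> - {0}"
  then have "v = norm v *\<^sub>R sgn v \<and> norm v > 0 \<and> sgn v \<in> sphere 0 1"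
    by (simp add: norm_sgn sgn_div_norm)
  then show "v \<in> pos_cone (sphere 0 1)"
    unfolding pos_cone_def by blast
qed (auto simp: pos_cone_def)

subsection \<open>Discreteness of the lattice\<close>

lemma finite_vectors_with_components_in:
  assumes "finite S"
  shows "finite {x :: 'a^'k::finite. \<forall>i. x $ i \<in> S}"
proof -
  have "{x :: 'a^'k. \<forall>i. x $ i \<in> S} \<subseteq> vec_lambda ` (\<Pi>\<^sub>E i\<in>UNIV. S)"
  proof
    fix x :: "'a^'k"
    assume "x \<in> {x. \<forall>i. x $ i \<in> S}"
    then have "vec_nth x \<in> (\<Pi>\<^sub>E i\<in>UNIV. S)"
      by auto
    then show "x \<in> vec_lambda ` (\<Pi>\<^sub>E i\<in>UNIV. S)"
      by (metis image_eqI vec_nth_inverse)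
  qed
  then show ?thesis
    by (rule finite_subset) (simp add: assms finite_PiE)
qed

lemma finite_lattice_cball:
  fixes M :: "real^('n::finite option)^('n option)"
  assumes "det M \<noteq> 0"
  shows "finite (lattice M \<inter> cball 0 R)"
proof -
  obtain N where N: "M ** N = mat 1"
    using assms invertible_det_nz invertible_def by blast
  obtain K where K: "K > 0" "\<And>x. norm (transpose N *v x) \<le> norm x * K"
    using bounded_linear.pos_bounded[OF matrix_vector_mul_bounded_linear] by blast
  define B where "B = {k \<in> \<int>. \<bar>k\<bar> \<le> R * K}"
  have "lattice M \<inter> cball 0 R \<subseteq> (\<lambda>m. m v* M) ` {m. \<forall>i. m $ i \<in> B}"
  proof
    fix w
    assume w: "w \<in> lattice M \<inter> cball 0 R"
    then obtain m where m: "w = m v* M" "\<forall>i. m $ i \<in> \<int>"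
      unfolding lattice_def by blast
    have "m = w v* N"
      using N by (simp add: m(1) vector_matrix_mul_assoc)
    moreover have "norm w * K \<le> R * K"
      using w K(1) by (simp add: mult_right_mono)
    ultimately have "\<bar>m $ i\<bar> \<le> R * K" for i
      using component_le_norm_cart[of m i] K(2)[of w] by simp
    then show "w \<in> (\<lambda>m. m v* M) ` {m. \<forall>i. m $ i \<in> B}"
      using m unfolding B_def by blast
  qed
  then show ?thesis
    by (rule finite_subset)
      (intro finite_imageI finite_vectors_with_components_in, simp add: B_def finite_abs_int_segment)
qed

subsection \<open>Reduction to a slab\<close>

definition slab_norms :: "real^('n::finite option)^('n option) \<Rightarrow> real \<Rightarrow> real set" where
  "slab_norms M s = {norm (vec_part w) | w. w \<in> lattice M \<and> 0 \<le> first_coord w \<and>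
                       first_coord w < s \<and> vec_part w \<noteq> 0}"

definition slab_min :: "real^('n::finite option)^('n option) \<Rightarrow> real \<Rightarrow> real" where
  "slab_min M s = Inf (slab_norms M s)"

lemma slab_norms_mono: "s \<le> s' \<Longrightarrow> slab_norms M s \<subseteq> slab_norms M s'"
  unfolding slab_norms_def by fastforce

lemma slab_min_le: "x \<in> slab_norms M s \<Longrightarrow> slab_min M s \<le> x"
  unfolding slab_min_def
  by (rule cInf_lower, assumption, rule bdd_belowI[of _ 0]) (auto simp: slab_norms_def)

lemma slab_min_antimono:
  assumes "s \<le> s'" "slab_norms M s \<noteq> {}"
  shows "slab_min M s' \<le> slab_min M s"
  using assms slab_min_le slab_norms_mono unfolding slab_min_def
  by (meson cInf_greatest subsetD)

lemma Q_set_sphere_norms: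
  assumes "0 < t" "t < 1"
  shows "norm ` vec_part ` Q_set (sphere (0::real^'n::finite) 1) M t = slab_norms M (max t (1 - t))"
proof (intro set_eqI iffI)
  fix x
  assume "x \<in> norm ` vec_part ` Q_set (sphere (0::real^'n) 1) M t"
  then obtain w where w: "w \<in> lattice M" "- t < first_coord w" "first_coord w < 1 - t"
    "vec_part w \<noteq> 0" "x = norm (vec_part w)"
    unfolding Q_set_def pos_cone_sphere by auto
  show "x \<in> slab_norms M (max t (1 - t))"
  proof (cases "0 \<le> first_coord w")
    case True
    then show ?thesis
      using w unfolding slab_norms_def by force
  next
    case False
    then show ?thesis
      using w lattice_uminus unfolding slab_norms_def
      by (intro CollectI exI[of _ "- w"]) auto
  qed
next
  fix x
  assume "x \<in> slab_norms M (max t (1 - t))"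
  then obtain w where w: "w \<in> lattice M" "0 \<le> first_coord w" "first_coord w < max t (1 - t)"
    "vec_part w \<noteq> 0" "x = norm (vec_part w)"
    unfolding slab_norms_def by auto
  show "x \<in> norm ` vec_part ` Q_set (sphere (0::real^'n) 1) M t"
  proof (cases "first_coord w < 1 - t")
    case True
    then have "w \<in> Q_set (sphere (0::real^'n) 1) M t"
      using w assms unfolding Q_set_def pos_cone_sphere by auto
    then show ?thesis
      using w by blast
  next
    case False
    then have "- w \<in> Q_set (sphere (0::real^'n) 1) M t"
      using w assms lattice_uminus unfolding Q_set_def pos_cone_sphere by auto
    moreover have "x = norm (vec_part (- w))"
      using w by simp
    ultimately show ?thesis
      by blast
  qed
qed

lemma F_fun_sphere:
  assumes "0 < t" "t < 1"
  shows "F_fun (sphere (0::real^'n::finite) 1) M t = slab_min M (max t (1 - t))"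
  unfolding F_fun_def slab_min_def Q_set_sphere_norms[OF assms] ..

lemma value_set_sphere:
  "value_set (sphere (0::real^'n::finite) 1) M = slab_min M ` {1/2..<1}"
proof (intro set_eqI iffI)
  fix x
  assume "x \<in> value_set (sphere (0::real^'n) 1) M"
  then obtain t where "0 < t" "t < 1" "x = F_fun (sphere (0::real^'n) 1) M t"
    unfolding value_set_def by blast
  moreover have "max t (1 - t) \<in> {1/2..<1}"
    using calculation by (auto simp: max_def)
  ultimately show "x \<in> slab_min M ` {1/2..<1}"
    using F_fun_sphere by blast
next
  fix x
  assume "x \<in> slab_min M ` {1/2..<1}"
  then obtain s where s: "1/2 \<le> s" "s < 1" "x = slab_min M s"
    by auto
  moreover have "max s (1 - s) = s"
    using s(1) by simp
  ultimately have "x = F_fun (sphere (0::real^'n) 1) M s"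
    using F_fun_sphere[of s M] by simp
  then show "x \<in> value_set (sphere (0::real^'n) 1) M"
    unfolding value_set_def using s by auto
qed

lemma slab_min_mem:
  assumes "det M \<noteq> 0" "slab_norms M s \<noteq> {}"
  shows "slab_min M s \<in> slab_norms M s"
proof -
  obtain x0 where x0: "x0 \<in> slab_norms M s"
    using assms(2) by blast
  define A where "A = slab_norms M s \<inter> {..x0}"
  have "A \<subseteq> norm ` vec_part ` (lattice M \<inter> cball 0 (s + x0))"
  proof
    fix x
    assume "x \<in> A"
    then obtain w where w: "w \<in> lattice M" "0 \<le> first_coord w" "first_coord w < s"
      "x = norm (vec_part w)" "x \<le> x0"
      unfolding A_def slab_norms_def by auto
    then have "norm w \<le> s + x0"
      using norm_le_first_coord_plus_vec_part[of w] by linarith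
    then show "x \<in> norm ` vec_part ` (lattice M \<inter> cball 0 (s + x0))"
      using w by auto
  qed
  then have "finite A"
    using finite_lattice_cball[OF assms(1)] finite_subset by blast
  moreover have "x0 \<in> A"
    using x0 unfolding A_def by simp
  ultimately have "Min A \<in> slab_norms M s" "Min A \<le> x0"
    using Min_in[of A] Min_le[of A x0] by (auto simp: A_def)
  moreover have "Min A \<le> x" if "x \<in> slab_norms M s" for x
    using that \<open>finite A\<close> \<open>Min A \<le> x0\<close> Min_le[of A x] by (cases "x \<le> x0") (auto simp: A_def)
  ultimately have "slab_min M s = Min A"
    unfolding slab_min_def by (intro cInf_eq_minimum)
  with \<open>Min A \<in> slab_norms M s\<close> show ?thesis
    by simp
qed

lemma slab_min_witness:
  assumes "det M \<noteq> 0" "s0 \<le> s" "slab_min M s \<noteq> slab_min M s0"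
  obtains w where "w \<in> lattice M" "s0 \<le> first_coord w" "first_coord w < s" "vec_part w \<noteq> 0"
    "norm (vec_part w) = slab_min M s"
proof -
  have "slab_norms M s \<noteq> {}" \<comment> \<open>otherwise both minima are the junk value \<open>Inf {}\<close>\<close>
    using assms(2,3) slab_norms_mono[OF assms(2), of M] unfolding slab_min_def by auto
  then obtain w where w: "w \<in> lattice M" "0 \<le> first_coord w" "first_coord w < s"
    "vec_part w \<noteq> 0" "norm (vec_part w) = slab_min M s"
    using slab_min_mem[OF assms(1)] unfolding slab_norms_def by force
  have "s0 \<le> first_coord w"
  proof (rule ccontr)
    assume "\<not> s0 \<le> first_coord w"
    then have "slab_min M s \<in> slab_norms M s0"
      using w unfolding slab_norms_def by force
    then have "slab_min M s0 \<le> slab_min M s" "slab_min M s \<le> slab_min M s0"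
      using slab_min_le slab_min_antimono[OF assms(2)] by blast+
    then show False
      using assms(3) by simp
  qed
  with w show thesis
    using that by blast
qed

lemma norm_vec_part_diff_in_slab_norms:
  assumes "w \<in> lattice M" "w' \<in> lattice M" "\<bar>first_coord w - first_coord w'\<bar> < s"
    "vec_part w \<noteq> vec_part w'"
  shows "norm (vec_part w - vec_part w') \<in> slab_norms M s"
proof (cases "first_coord w' \<le> first_coord w")
  case True
  then show ?thesis
    using assms lattice_diff unfolding slab_norms_def
    by (intro CollectI exI[of _ "w - w'"]) auto
next
  case False
  then show ?thesis
    using assms lattice_diff unfolding slab_norms_def
    by (intro CollectI exI[of _ "w' - w"]) (auto simp: norm_minus_commute)
qed

subsection \<open>Kissing configurations\<close>

text \<open>The side \<open>a - b\<close> is the longest of the triangle \<open>0, a, b\<close>, so the angle at \<open>0\<close> is at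
  least \<open>\<pi>/3\<close>.\<close>
lemma one_le_dist_sgn:
  fixes a b :: "'a::real_inner"
  assumes "a \<noteq> 0" "b \<noteq> 0" "norm a \<le> norm (a - b)" "norm b \<le> norm (a - b)"
  shows "1 \<le> dist (sgn a) (sgn b)"
proof -
  define A B p where "A = norm a" and "B = norm b" and "p = inner a b"
  have "A > 0" "B > 0"
    using assms(1,2) by (simp_all add: A_def B_def)
  have diff: "(norm (a - b))\<^sup>2 = A\<^sup>2 + B\<^sup>2 - 2 * p"
    by (simp add: A_def B_def p_def power2_norm_eq_inner inner_diff_left inner_diff_right
        inner_commute)
  have "A\<^sup>2 \<le> (norm (a - b))\<^sup>2" "B\<^sup>2 \<le> (norm (a - b))\<^sup>2"
    using assms(3,4) by (simp_all add: A_def B_def power_mono)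
  then have "2 * p \<le> A\<^sup>2" "2 * p \<le> B\<^sup>2"
    using diff by linarith+
  have "2 * p \<le> A * B"
  proof (cases "A \<le> B")
    case True
    then have "A * A \<le> A * B"
      using \<open>A > 0\<close> by (simp add: mult_left_mono)
    with \<open>2 * p \<le> A\<^sup>2\<close> show ?thesis
      by (simp add: power2_eq_square)
  next
    case False
    then have "B * B \<le> A * B"
      using \<open>B > 0\<close> by (simp add: mult_right_mono)
    with \<open>2 * p \<le> B\<^sup>2\<close> show ?thesis
      by (simp add: power2_eq_square)
  qed
  then have "p / (A * B) \<le> 1 / 2"
    using \<open>A > 0\<close> \<open>B > 0\<close> by (simp add: divide_simps)
  have "(dist (sgn a) (sgn b))\<^sup>2
      = (norm (sgn a))\<^sup>2 + (norm (sgn b))\<^sup>2 - 2 * inner (sgn a) (sgn b)"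
    by (simp add: dist_norm power2_norm_eq_inner inner_diff_left inner_diff_right inner_commute)
  also have "\<dots> = 2 - 2 * (p / (A * B))"
    using assms(1,2) by (simp add: norm_sgn sgn_div_norm A_def B_def p_def field_simps)
  also have "\<dots> \<ge> 1\<^sup>2"
    using \<open>p / (A * B) \<le> 1 / 2\<close> by (simp add: mult.commute)
  finally have "1\<^sup>2 \<le> (dist (sgn a) (sgn b))\<^sup>2" .
  then show ?thesis
    by (rule power2_le_imp_le) simp
qed

lemma disjoint_balls_iff:
  fixes x y :: "'a::real_normed_vector"
  shows "ball x r \<inter> ball y r = {} \<longleftrightarrow> 2 * r \<le> dist x y"
proof
  assume disjoint: "ball x r \<inter> ball y r = {}"
  show "2 * r \<le> dist x y"
  proof (rule ccontr)
    assume "\<not> 2 * r \<le> dist x y"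
    then have "midpoint x y \<in> ball x r \<inter> ball y r"
      by (simp add: dist_midpoint)
    with disjoint show False
      by blast
  qed
qed (simp add: disjoint_ballI)

lemma separated_card_le_cover:
  fixes C :: "'a::metric_space set"
  assumes "finite C" "T \<subseteq> (\<Union>c\<in>C. ball c r)" "\<forall>x\<in>T. \<forall>y\<in>T. x \<noteq> y \<longrightarrow> 2 * r \<le> dist x y"
  shows "finite T \<and> card T \<le> card C"
proof -
  have "\<forall>x\<in>T. \<exists>c. c \<in> C \<and> x \<in> ball c r"
    using assms(2) by blast
  then obtain f where f: "\<forall>x\<in>T. f x \<in> C \<and> x \<in> ball (f x) r"
    by (rule bchoice[THEN exE])
  have "inj_on f T"
  proof (rule inj_onI, rule ccontr)
    fix x y
    assume "x \<in> T" "y \<in> T" "f x = f y" "x \<noteq> y"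
    then have "dist x y < 2 * r"
      using f dist_triangle_less_add[of x "f x" r y r] by (auto simp: dist_commute)
    moreover have "2 * r \<le> dist x y"
      using assms(3) \<open>x \<in> T\<close> \<open>y \<in> T\<close> \<open>x \<noteq> y\<close> by blast
    ultimately show False
      by simp
  qed
  moreover have "f ` T \<subseteq> C"
    using f by blast
  ultimately show ?thesis
    using assms(1) inj_on_finite card_inj_on_le by blast
qed

lemma kissing_configuration_card_le:
  fixes T :: "'a::{real_normed_vector,perfect_space,heine_borel} set"
  assumes "T \<subseteq> sphere 0 2" "\<forall>x\<in>T. \<forall>y\<in>T. x \<noteq> y \<longrightarrow> 2 \<le> dist x y"
  shows "finite T \<and> card T \<le> kissing_number TYPE('a)"
proof -
  obtain C where C: "finite C" "sphere (0::'a) 2 \<subseteq> (\<Union>c\<in>C. ball c 1)"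
    using seq_compact_imp_totally_bounded[OF compact_imp_seq_compact[OF compact_sphere]]
    by (metis zero_less_one)
  define K where "K = {card S | S :: 'a set. finite S \<and> S \<subseteq> sphere 0 2 \<and>
        (\<forall>x\<in>S. \<forall>y\<in>S. x \<noteq> y \<longrightarrow> ball x 1 \<inter> ball y 1 = {})}"
  have "finite T"
    using separated_card_le_cover[OF C(1) order_trans[OF assms(1) C(2)]] assms(2) by simp
  then have "card T \<in> K"
    using assms unfolding K_def disjoint_balls_iff by auto
  moreover have "bdd_above K"
    using separated_card_le_cover[OF C(1) order_trans[OF _ C(2)]]
    by (intro bdd_aboveI[of _ "card C"]) (auto simp: K_def disjoint_balls_iff)
  ultimately have "card T \<le> Sup K"
    by (rule cSup_upper)
  with \<open>finite T\<close> show ?thesis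
    unfolding kissing_number_def K_def by simp
qed

lemma mutually_short_vectors_card_le_kissing_number:
  fixes V :: "'a::{real_inner,perfect_space,heine_borel} set"
  assumes "0 \<notin> V" "\<forall>a\<in>V. \<forall>b\<in>V. a \<noteq> b \<longrightarrow> norm a \<le> norm (a - b)"
  shows "finite V \<and> card V \<le> kissing_number TYPE('a)"
proof -
  define X where "X a = 2 *\<^sub>R sgn a" for a :: 'a
  have sep: "2 \<le> dist (X a) (X b)" if "a \<in> V" "b \<in> V" "a \<noteq> b" for a b
  proof -
    have "norm a \<le> norm (a - b)" "norm b \<le> norm (b - a)"
      using assms(2) that by auto
    then have "1 \<le> dist (sgn a) (sgn b)"
      using assms(1) that by (intro one_le_dist_sgn) (auto simp: norm_minus_commute)
    then show ?thesis
      by (simp add: X_def dist_norm flip: scaleR_diff_right)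
  qed
  have "inj_on X V"
  proof (rule inj_onI, rule ccontr)
    fix a b
    assume "a \<in> V" "b \<in> V" "X a = X b" "a \<noteq> b"
    then show False
      using sep[of a b] by simp
  qed
  have "X ` V \<subseteq> sphere 0 2"
  proof
    fix x
    assume "x \<in> X ` V"
    then obtain a where "a \<in> V" "x = X a"
      by blast
    moreover have "a \<noteq> 0"
      using assms(1) \<open>a \<in> V\<close> by auto
    ultimately show "x \<in> sphere 0 2"
      by (simp add: X_def norm_sgn)
  qed
  moreover have "\<forall>x\<in>X ` V. \<forall>y\<in>X ` V. x \<noteq> y \<longrightarrow> 2 \<le> dist x y"
  proof (intro ballI impI)
    fix x y
    assume "x \<in> X ` V" "y \<in> X ` V" "x \<noteq> y"
    then obtain a b where "a \<in> V" "b \<in> V" "x = X a" "y = X b"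
      by (auto elim!: imageE)
    moreover have "a \<noteq> b"
      using \<open>x \<noteq> y\<close> calculation by auto
    ultimately show "2 \<le> dist x y"
      using sep by simp
  qed
  ultimately have "finite (X ` V) \<and> card (X ` V) \<le> kissing_number TYPE('a)"
    by (rule kissing_configuration_card_le)
  with \<open>inj_on X V\<close> show ?thesis
    by (simp add: card_image finite_image_iff)
qed

lemma new_slab_min_values_card_le_kissing_number:
  fixes M :: "real^('n::finite option)^('n option)"
  assumes "det M \<noteq> 0"
  defines "V \<equiv> slab_min M ` {1/2..<1} - {slab_min M (1/2)}"
  shows "finite V \<and> card V \<le> kissing_number TYPE(real^'n)"
proof -
  have "\<exists>w. w \<in> lattice M \<and> 1/2 \<le> first_coord w \<and> first_coord w < 1 \<and> vec_part w \<noteq> 0 \<and>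
      norm (vec_part w) = r \<and> (\<forall>x \<in> slab_norms M (1/2). r \<le> x)" if r: "r \<in> V" for r
  proof -
    obtain s where s: "1/2 \<le> s" "s < 1" "r = slab_min M s" "r \<noteq> slab_min M (1/2)"
      using r unfolding V_def by auto
    obtain w where "w \<in> lattice M" "1/2 \<le> first_coord w" "first_coord w < s"
      "vec_part w \<noteq> 0" "norm (vec_part w) = r"
      using slab_min_witness[OF assms(1) s(1)] s(3,4) by metis
    moreover have "\<forall>x \<in> slab_norms M (1/2). r \<le> x"
      using slab_min_le slab_norms_mono[OF s(1)] s(3) by blast
    ultimately show ?thesis
      using s(2) by (intro exI[of _ w]) auto
  qed
  then obtain W where W: "\<forall>r\<in>V. W r \<in> lattice M \<and> 1/2 \<le> first_coord (W r) \<and>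
      first_coord (W r) < 1 \<and> vec_part (W r) \<noteq> 0 \<and> norm (vec_part (W r)) = r \<and>
      (\<forall>x \<in> slab_norms M (1/2). r \<le> x)"
    by (metis bchoice)
  define U where "U = (\<lambda>r. vec_part (W r)) ` V"
  have "inj_on (\<lambda>r. vec_part (W r)) V"
    by (rule inj_on_inverseI[where g = norm]) (use W in simp)
  moreover have "finite U \<and> card U \<le> kissing_number TYPE(real^'n)"
  proof (rule mutually_short_vectors_card_le_kissing_number)
    show "0 \<notin> U"
      using W unfolding U_def by auto
    show "\<forall>a\<in>U. \<forall>b\<in>U. a \<noteq> b \<longrightarrow> norm a \<le> norm (a - b)"
    proof (intro ballI impI)
      fix a b
      assume "a \<in> U" "b \<in> U" "a \<noteq> b"
      then obtain r r' where rr: "r \<in> V" "r' \<in> V" and ab: "a = vec_part (W r)" "b = vec_part (W r')"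
        unfolding U_def by blast
      have "\<bar>first_coord (W r) - first_coord (W r')\<bar> < 1/2"
        using W[rule_format, OF rr(1)] W[rule_format, OF rr(2)] by arith
      then have "norm (vec_part (W r) - vec_part (W r')) \<in> slab_norms M (1/2)"
        using W[rule_format, OF rr(1)] W[rule_format, OF rr(2)] ab \<open>a \<noteq> b\<close>
        by (intro norm_vec_part_diff_in_slab_norms) auto
      then show "norm a \<le> norm (a - b)"
        using W[rule_format, OF rr(1)] ab by simp
    qed
  qed
  ultimately show ?thesis
    unfolding U_def by (simp add: card_image finite_image_iff)
qed

theorem theorem6p1:
  fixes M :: "real^('n::finite option)^('n option)"
  assumes "CARD('n) \<ge> 3"
    and "det M = 1"
  shows "finite (value_set (sphere (0::real^'n) 1) M) \<and>
         card (value_set (sphere (0::real^'n) 1) M) \<le> kissing_number TYPE(real^'n) + 1"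
proof -
  let ?V = "slab_min M ` {1/2..<1} - {slab_min M (1/2)}"
  have V: "finite ?V" "card ?V \<le> kissing_number TYPE(real^'n)"
    using new_slab_min_values_card_le_kissing_number[of M] assms(2) by simp_all
  have sub: "value_set (sphere (0::real^'n) 1) M \<subseteq> insert (slab_min M (1/2)) ?V"
    unfolding value_set_sphere by blast
  have "finite (value_set (sphere (0::real^'n) 1) M)"
    using finite_subset[OF sub] V(1) by simp
  moreover have "card (value_set (sphere (0::real^'n) 1) M) \<le> card (insert (slab_min M (1/2)) ?V)"
    using sub V(1) by (intro card_mono) simp_all
  moreover have "card (insert (slab_min M (1/2)) ?V) \<le> card ?V + 1"
    using V(1) by (simp add: card_insert_if)
  ultimately show ?thesis
    using V(2) by linarith
qed

end
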